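(* Let $\mathbb{Q}$ be the rationals and $A,B\subseteq\mathbb{Q}$. The following are equivalent: (i) the crisp context $(A,B,\leq)$ is a reduct of $(\mathbb{Q},\mathbb{Q},\leq)$ in FCA; (ii) the crisp context $(A,B,\not\leq)$ is a reduct of $(\mathbb{Q},\mathbb{Q},\not\leq)$ in RST; (iii) both $A$ and $B$ are dense in $\mathbb{Q}$ (with respect to the usual order topology, i.e. each meets every nonempty open interval of $\mathbb{Q}$).
   Context: Crisp contexts are $L$-contexts for $L=\{0,1\}$ with $*=\wedge$; a context is a triple $(X,Y,R)$ with $R\subseteq X\times Y$, and subsets of $X$ are identified with maps $X\to\{0,1\}$. $(A,B,\le)$ denotes $(A,B,R)$ with $R=\{(a,b)\in A\times B\mid a\le b\}$, and $\not\le$ its complement. For $U\subseteq X$, $V\subseteq Y$: $R^\uparrow U=\{y\mid\forall x\in U,(x,y)\in R\}$, $R^\downarrow V=\{x\mid\forall y\in V,(x,y)\in R\}$, $R^\exists U=\{y\mid\exists x\in U,(x,y)\in R\}$, $R^\forall V=\{x\mid\forall y,(x,y)\in R\Rightarrow y\in V\}$. $\mathcal{M}R=\{U\mid R^\downarrow R^\uparrow U=U\}$, $\mathcal{K}R=\{U\mid R^\forall R^\exists U=U\}$. For $X'\subseteq X$, $Y'\subseteq Y$, $R_{X',Y'}=R\cap(X'\times Y')$. $(X',Y',R_{X',Y'})$ is a reduct of $(X,Y,R)$ in FCA if the map $\mathcal{M}R_{X',Y'}\to\mathcal{M}R$, $U'\mapsto R^\downarrow R^\uparrow U'$, is an order isomorphism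 (with respect to inclusion); it is a reduct in RST if the map $\mathcal{K}R_{X',Y'}\to\mathcal{K}R$, $U'\mapsto R^\forall R^\exists U'$, is an order isomorphism. *)

theory Defs
  imports Complex_Main
begin

text \<open>A crisp context is a triple (X, Y, R) with R a relation between elements of the
  carrier X and the carrier Y; we represent it by the carriers X, Y and a relation
  R :: 'a \<Rightarrow> 'b \<Rightarrow> bool (only its values on X \<times> Y matter).\<close>

definition ctx_up :: "'a set \<Rightarrow> 'b set \<Rightarrow> ('a \<Rightarrow> 'b \<Rightarrow> bool) \<Rightarrow> 'a set \<Rightarrow> 'b set" where
  "ctx_up X Y R U = {y \<in> Y. \<forall>x\<in>U. R x y}"

definition ctx_down :: "'a set \<Rightarrow> 'b set \<Rightarrow> ('a \<Rightarrow> 'b \<Rightarrow> bool) \<Rightarrow> 'b set \<Rightarrow> 'a set" where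
  "ctx_down X Y R V = {x \<in> X. \<forall>y\<in>V. R x y}"

definition ctx_ex :: "'a set \<Rightarrow> 'b set \<Rightarrow> ('a \<Rightarrow> 'b \<Rightarrow> bool) \<Rightarrow> 'a set \<Rightarrow> 'b set" where
  "ctx_ex X Y R U = {y \<in> Y. \<exists>x\<in>U. R x y}"

definition ctx_all :: "'a set \<Rightarrow> 'b set \<Rightarrow> ('a \<Rightarrow> 'b \<Rightarrow> bool) \<Rightarrow> 'b set \<Rightarrow> 'a set" where
  "ctx_all X Y R V = {x \<in> X. \<forall>y\<in>Y. R x y \<longrightarrow> y \<in> V}"

definition ctx_M :: "'a set \<Rightarrow> 'b set \<Rightarrow> ('a \<Rightarrow> 'b \<Rightarrow> bool) \<Rightarrow> 'a set set" where
  "ctx_M X Y R = {U. U \<subseteq> X \<and> ctx_down X Y R (ctx_up X Y R U) = U}"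

definition ctx_K :: "'a set \<Rightarrow> 'b set \<Rightarrow> ('a \<Rightarrow> 'b \<Rightarrow> bool) \<Rightarrow> 'a set set" where
  "ctx_K X Y R = {U. U \<subseteq> X \<and> ctx_all X Y R (ctx_ex X Y R U) = U}"

definition order_iso_on :: "('a set \<Rightarrow> 'b set) \<Rightarrow> 'a set set \<Rightarrow> 'b set set \<Rightarrow> bool" where
  "order_iso_on f S T \<longleftrightarrow> bij_betw f S T \<and> (\<forall>U\<in>S. \<forall>V\<in>S. U \<subseteq> V \<longleftrightarrow> f U \<subseteq> f V)"

text \<open>(X', Y', R restricted) is a reduct of (X, Y, R) in FCA. The restriction of R to
  X' \<times> Y' is represented by the same relation R with carriers X', Y'.\<close>
definition reduct_FCA ::
  "'a set \<Rightarrow> 'b set \<Rightarrow> 'a set \<Rightarrow> 'b set \<Rightarrow> ('a \<Rightarrow> 'b \<Rightarrow> bool) \<Rightarrow> bool" where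
  "reduct_FCA X' Y' X Y R \<longleftrightarrow>
     X' \<subseteq> X \<and> Y' \<subseteq> Y \<and>
     order_iso_on (\<lambda>U'. ctx_down X Y R (ctx_up X Y R U')) (ctx_M X' Y' R) (ctx_M X Y R)"

definition reduct_RST ::
  "'a set \<Rightarrow> 'b set \<Rightarrow> 'a set \<Rightarrow> 'b set \<Rightarrow> ('a \<Rightarrow> 'b \<Rightarrow> bool) \<Rightarrow> bool" where
  "reduct_RST X' Y' X Y R \<longleftrightarrow>
     X' \<subseteq> X \<and> Y' \<subseteq> Y \<and>
     order_iso_on (\<lambda>U'. ctx_all X Y R (ctx_ex X Y R U')) (ctx_K X' Y' R) (ctx_K X Y R)"

definition dense_rat :: "rat set \<Rightarrow> bool" where
  "dense_rat A \<longleftrightarrow> (\<forall>a b. a < b \<longrightarrow> (\<exists>x\<in>A. a < x \<and> x < b))"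

end

theory Submission
  imports Defs
begin

text \<open>For a linear order both \<open>R\<^sup>\<down>R\<^sup>\<up>\<close> for \<open>R = \<le>\<close> and \<open>R\<^sup>\<forall>R\<^sup>\<exists>\<close> for \<open>R = \<not>\<le>\<close> send U to the
  set of x lying below every upper bound of U, so FCA-reducts of \<open>\<le>\<close> and RST-reducts of
  \<open>\<not>\<le>\<close> are the same thing. The canonical map from the closed sets of a subcontext
  \<open>(A, B)\<close> to those of the whole context always reflects inclusion, so being a reduct
  means being surjective. If B is dense, the \<open>(A, B)\<close>-closure is the trace on A of the full
  closure; if A is dense, a closed set W is the closure of \<open>A \<inter> W\<close>; together this gives
  surjectivity. Conversely, the principal down-sets \<open>{..m}\<close> must be hit, and the only
  candidates \<open>A \<inter> {..m}\<close> work for all m only if A and B are dense.\<close>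

definition le_closure :: "'a::order set \<Rightarrow> 'a set \<Rightarrow> 'a set \<Rightarrow> 'a set" where
  "le_closure X Y U = {x \<in> X. \<forall>y\<in>Y. (\<forall>u\<in>U. u \<le> y) \<longrightarrow> x \<le> y}"

definition order_dense :: "'a::order set \<Rightarrow> bool" where
  "order_dense A \<longleftrightarrow> (\<forall>a b. a < b \<longrightarrow> (\<exists>x\<in>A. a < x \<and> x < b))"

lemma dense_rat_eq_order_dense: "dense_rat = order_dense"
  unfolding dense_rat_def order_dense_def ..

lemma ctx_down_up_le: "ctx_down X Y (\<le>) (ctx_up X Y (\<le>) U) = le_closure X Y U"
  unfolding ctx_down_def ctx_up_def le_closure_def by auto

lemma ctx_all_ex_not_le:
  "ctx_all X Y (\<lambda>a b. \<not> (a::'a::linorder) \<le> b) (ctx_ex X Y (\<lambda>a b. \<not> a \<le> b) U)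
   = le_closure X Y U"
  unfolding ctx_all_def ctx_ex_def le_closure_def by auto

lemma ctx_M_le: "ctx_M X Y (\<le>) = {U. U \<subseteq> X \<and> le_closure X Y U = U}"
  unfolding ctx_M_def ctx_down_up_le ..

lemma reduct_FCA_le_iff_reduct_RST_not_le:
  "reduct_FCA A B X Y (\<le>) \<longleftrightarrow> reduct_RST A B X Y (\<lambda>a b. \<not> (a::'a::linorder) \<le> b)"
proof -
  have "ctx_K X' Y' (\<lambda>a b. \<not> (a::'a) \<le> b) = ctx_M X' Y' (\<le>)" for X' Y'
    unfolding ctx_K_def ctx_all_ex_not_le ctx_M_le ..
  then show ?thesis
    unfolding reduct_FCA_def reduct_RST_def ctx_down_up_le ctx_all_ex_not_le by simp
qed

lemma le_closure_le_upper_bound: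
  "x \<in> le_closure X Y U \<Longrightarrow> y \<in> Y \<Longrightarrow> \<forall>u\<in>U. u \<le> y \<Longrightarrow> x \<le> y"
  unfolding le_closure_def by auto

lemma le_closure_subset: "le_closure X Y U \<subseteq> X"
  unfolding le_closure_def by auto

lemma le_closure_mono: "U \<subseteq> V \<Longrightarrow> le_closure X Y U \<subseteq> le_closure X Y V"
  unfolding le_closure_def by auto

lemma le_closure_extensive: "U \<subseteq> X \<Longrightarrow> U \<subseteq> le_closure X Y U"
  unfolding le_closure_def by auto

lemma le_closure_idem: "le_closure X Y (le_closure X Y U) = le_closure X Y U"
  unfolding le_closure_def by auto

lemma le_closure_atMost: "le_closure UNIV UNIV {..m} = {..m}"
  unfolding le_closure_def by (auto intro: order_trans)

lemma le_closure_reflects_subset: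
  assumes "U \<subseteq> A" "A \<subseteq> X" "B \<subseteq> Y" "le_closure A B V = V"
    and "le_closure X Y U \<subseteq> le_closure X Y V"
  shows "U \<subseteq> V"
proof
  fix u assume "u \<in> U"
  then have "u \<in> le_closure X Y V"
    using assms le_closure_extensive[of U X Y] by blast
  then have "u \<in> le_closure A B V"
    using \<open>u \<in> U\<close> assms(1-3) unfolding le_closure_def by blast
  then show "u \<in> V" using assms(4) by simp
qed

lemma reduct_FCA_le_iff_surj:
  fixes A B X Y :: "'a::order set"
  assumes "A \<subseteq> X" "B \<subseteq> Y"
  shows "reduct_FCA A B X Y (\<le>) \<longleftrightarrow> ctx_M X Y (\<le>) \<subseteq> le_closure X Y ` ctx_M A B (\<le>)"
proof -
  have into: "le_closure X Y ` ctx_M A B (\<le>) \<subseteq> ctx_M X Y (\<le>)"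
    unfolding ctx_M_le using le_closure_subset le_closure_idem by blast
  have iff: "U \<subseteq> V \<longleftrightarrow> le_closure X Y U \<subseteq> le_closure X Y V"
    if "U \<in> ctx_M A B (\<le>)" "V \<in> ctx_M A B (\<le>)" for U V
  proof
    show "U \<subseteq> V \<Longrightarrow> le_closure X Y U \<subseteq> le_closure X Y V" by (rule le_closure_mono)
    show "le_closure X Y U \<subseteq> le_closure X Y V \<Longrightarrow> U \<subseteq> V"
      using that assms by (intro le_closure_reflects_subset[of U A X B Y V]) (auto simp: ctx_M_le)
  qed
  have "inj_on (le_closure X Y) (ctx_M A B (\<le>))"
  proof (rule inj_onI)
    fix U V assume "U \<in> ctx_M A B (\<le>)" "V \<in> ctx_M A B (\<le>)"
      and "le_closure X Y U = le_closure X Y V"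
    with iff show "U = V" by (metis subset_antisym order_refl)
  qed
  moreover have "\<forall>U\<in>ctx_M A B (\<le>). \<forall>V\<in>ctx_M A B (\<le>).
      U \<subseteq> V \<longleftrightarrow> le_closure X Y U \<subseteq> le_closure X Y V"
    using iff by blast
  ultimately have "reduct_FCA A B X Y (\<le>) \<longleftrightarrow>
      le_closure X Y ` ctx_M A B (\<le>) = ctx_M X Y (\<le>)"
    using assms unfolding reduct_FCA_def order_iso_on_def bij_betw_def ctx_down_up_le by blast
  with into show ?thesis by blast
qed

lemma le_closure_dense_codomain:
  fixes A B U :: "'a::linorder set"
  assumes "order_dense B"
  shows "le_closure A B U = A \<inter> le_closure UNIV UNIV U"
proof
  show "A \<inter> le_closure UNIV UNIV U \<subseteq> le_closure A B U"
    unfolding le_closure_def by auto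
  show "le_closure A B U \<subseteq> A \<inter> le_closure UNIV UNIV U"
  proof (clarsimp simp: le_closure_def)
    fix x y assume x: "x \<in> A" "\<forall>b\<in>B. (\<forall>u\<in>U. u \<le> b) \<longrightarrow> x \<le> b" and y: "\<forall>u\<in>U. u \<le> y"
    show "x \<le> y"
    proof (rule ccontr)
      assume "\<not> x \<le> y"
      then obtain b where "b \<in> B" "y < b" "b < x"
        using assms unfolding order_dense_def by (meson not_le)
      then show False using x y by force
    qed
  qed
qed

lemma le_closure_inter_dense:
  fixes A U :: "'a::linorder set"
  assumes "order_dense A"
  shows "le_closure UNIV UNIV (A \<inter> le_closure UNIV UNIV U) = le_closure UNIV UNIV U"
proof
  show "le_closure UNIV UNIV (A \<inter> le_closure UNIV UNIV U) \<subseteq> le_closure UNIV UNIV U"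
    by (metis Int_lower2 le_closure_mono le_closure_idem)
  show "le_closure UNIV UNIV U \<subseteq> le_closure UNIV UNIV (A \<inter> le_closure UNIV UNIV U)"
  proof (clarsimp simp: le_closure_def[of UNIV UNIV "A \<inter> _"])
    fix x y assume x: "x \<in> le_closure UNIV UNIV U"
      and y: "\<forall>u\<in>A \<inter> le_closure UNIV UNIV U. u \<le> y"
    show "x \<le> y"
    proof (rule ccontr)
      assume "\<not> x \<le> y"
      then obtain a where a: "a \<in> A" "y < a" "a < x"
        using assms unfolding order_dense_def by (meson not_le)
      then have "a \<in> le_closure UNIV UNIV U"
        using x unfolding le_closure_def by auto
      then show False using a y by force
    qed
  qed
qed

lemma le_closure_surj_if_dense:
  fixes A B :: "'a::linorder set"
  assumes "order_dense A" "order_dense B"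
  shows "ctx_M UNIV UNIV (\<le>) \<subseteq> le_closure UNIV UNIV ` ctx_M A B (\<le>)"
proof
  fix W :: "'a set" assume "W \<in> ctx_M UNIV UNIV (\<le>)"
  then have W: "le_closure UNIV UNIV W = W" by (simp add: ctx_M_le)
  have hit: "le_closure UNIV UNIV (A \<inter> W) = W"
    using le_closure_inter_dense[OF assms(1), of W] W by simp
  then have "A \<inter> W \<in> ctx_M A B (\<le>)"
    using le_closure_dense_codomain[OF assms(2), of A "A \<inter> W"] by (auto simp: ctx_M_le)
  with hit show "W \<in> le_closure UNIV UNIV ` ctx_M A B (\<le>)" by (metis imageI)
qed

lemma le_closure_atMost_if_surj:
  fixes A B :: "'a::linorder set"
  assumes "ctx_M UNIV UNIV (\<le>) \<subseteq> le_closure UNIV UNIV ` ctx_M A B (\<le>)"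
  shows "le_closure A B (A \<inter> {..m}) = A \<inter> {..m}"
    and "le_closure UNIV UNIV (A \<inter> {..m}) = {..m}"
proof -
  have "{..m} \<in> ctx_M UNIV UNIV (\<le>)" by (simp add: ctx_M_le le_closure_atMost)
  then obtain U where "U \<in> ctx_M A B (\<le>)" "le_closure UNIV UNIV U = {..m}"
    using assms by blast
  then have U: "U \<subseteq> A" "le_closure A B U = U" "le_closure UNIV UNIV U = {..m}"
    by (simp_all add: ctx_M_le)
  have "U = A \<inter> {..m}"
  proof
    show "U \<subseteq> A \<inter> {..m}" using U le_closure_extensive[of U UNIV UNIV] by auto
    show "A \<inter> {..m} \<subseteq> U"
    proof
      fix a assume a: "a \<in> A \<inter> {..m}"
      have "m \<le> b" if "b \<in> B" "\<forall>u\<in>U. u \<le> b" for b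
        using le_closure_le_upper_bound[of m UNIV UNIV U b] that U(3) by simp
      with a have "a \<in> le_closure A B U" unfolding le_closure_def by force
      with U(2) show "a \<in> U" by simp
    qed
  qed
  with U show "le_closure A B (A \<inter> {..m}) = A \<inter> {..m}"
    and "le_closure UNIV UNIV (A \<inter> {..m}) = {..m}" by simp_all
qed

lemma order_dense_domain_if_surj:
  fixes A B :: "'a::dense_linorder set"
  assumes "ctx_M UNIV UNIV (\<le>) \<subseteq> le_closure UNIV UNIV ` ctx_M A B (\<le>)"
  shows "order_dense A"
  unfolding order_dense_def
proof (intro allI impI)
  fix p q :: 'a assume "p < q"
  then obtain m where m: "p < m" "m < q" using dense by blast
  show "\<exists>x\<in>A. p < x \<and> x < q"
  proof (rule ccontr)
    assume "\<not> ?thesis"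
    with m have "\<forall>a\<in>A \<inter> {..m}. a \<le> p" by force
    then have "m \<le> p"
      using le_closure_le_upper_bound[of m UNIV UNIV "A \<inter> {..m}" p]
        le_closure_atMost_if_surj(2)[OF assms] by simp
    with m show False by simp
  qed
qed

lemma order_dense_codomain_if_surj:
  fixes A B :: "'a::dense_linorder set"
  assumes surj: "ctx_M UNIV UNIV (\<le>) \<subseteq> le_closure UNIV UNIV ` ctx_M A B (\<le>)"
  shows "order_dense B"
  unfolding order_dense_def
proof (intro allI impI)
  fix p q :: 'a assume "p < q"
  then obtain m1 m2 where m: "p < m1" "m1 < m2" "m2 < q" by (meson dense)
  show "\<exists>x\<in>B. p < x \<and> x < q"
  proof (rule ccontr)
    assume no_B: "\<not> ?thesis"
    have "A \<inter> {..m2} \<subseteq> le_closure A B (A \<inter> {..m1})"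
    proof (clarsimp simp: le_closure_def)
      fix a b assume "a \<in> A" "a \<le> m2" "b \<in> B" "\<forall>u\<in>A \<inter> {..m1}. u \<le> b"
      then have "m1 \<le> b"
        using le_closure_le_upper_bound[of m1 UNIV UNIV "A \<inter> {..m1}" b]
          le_closure_atMost_if_surj(2)[OF surj] by simp
      with no_B \<open>b \<in> B\<close> m have "q \<le> b" by force
      with \<open>a \<le> m2\<close> m show "a \<le> b" by simp
    qed
    then have "le_closure UNIV UNIV (A \<inter> {..m2}) \<subseteq> le_closure UNIV UNIV (A \<inter> {..m1})"
      by (intro le_closure_mono) (simp add: le_closure_atMost_if_surj(1)[OF surj])
    then have "m2 \<le> m1" by (simp add: le_closure_atMost_if_surj(2)[OF surj])
    with m show False by simp
  qed
qed

lemma reduct_FCA_le_iff_order_dense: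
  fixes A B :: "'a::dense_linorder set"
  shows "reduct_FCA A B UNIV UNIV (\<le>) \<longleftrightarrow> order_dense A \<and> order_dense B"
  using reduct_FCA_le_iff_surj[of A UNIV B UNIV] le_closure_surj_if_dense
    order_dense_domain_if_surj order_dense_codomain_if_surj by auto

theorem mainTheorem9:
  fixes A B :: "rat set"
  shows "(reduct_FCA A B UNIV UNIV (\<lambda>a b. a \<le> b) \<longleftrightarrow>
          reduct_RST A B UNIV UNIV (\<lambda>a b. \<not> a \<le> b)) \<and>
         (reduct_RST A B UNIV UNIV (\<lambda>a b. \<not> a \<le> b) \<longleftrightarrow>
          dense_rat A \<and> dense_rat B)"
  using reduct_FCA_le_iff_reduct_RST_not_le[of A B UNIV UNIV]
    reduct_FCA_le_iff_order_dense[of A B]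
  by (simp add: dense_rat_eq_order_dense)

end
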